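(* Let $\kappa$ be any cardinal, let $d\geq 1$, and let $\kappa_1,\dots,\kappa_d$ be uncountable regular cardinals such that $\kappa_1>\kappa$ and $\kappa_{i+1}>2^{\kappa_i}$ for all $i<d$. Then for every function $f:\kappa_1\times\cdots\times\kappa_d\to\kappa$ there exist stationary sets $\kappa_1'\subseteq\kappa_1,\dots,\kappa_d'\subseteq\kappa_d$ such that $f$ is constant on $\kappa_1'\times\cdots\times\kappa_d'$.
   Context: A subset of a regular uncountable cardinal $\nu$ is stationary if it meets every closed unbounded subset of $\nu$. *)

theory Defs
  imports Main "HOL-Library.FuncSet" "HOL-Library.Countable_Set"
begin

text \<open>A cardinal is represented, as in the HOL library (BNF_Cardinal_Order_Relation),
by a cardinal order relation r (Card_order r): a well-order on Field r of minimal
order type, i.e. an initial ordinal. (a,b) \<in> r means a \<le> b.\<close>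

definition strictly_below :: "'a rel \<Rightarrow> 'a \<Rightarrow> 'a \<Rightarrow> bool" where
  "strictly_below r a b \<longleftrightarrow> (a, b) \<in> r \<and> a \<noteq> b"

text \<open>C is closed: every limit point alpha of C (C below alpha nonempty and cofinal
in alpha, i.e. alpha = sup (C \<inter> alpha)) lies in C.\<close>
definition closed_in_ord :: "'a rel \<Rightarrow> 'a set \<Rightarrow> bool" where
  "closed_in_ord r C \<longleftrightarrow> C \<subseteq> Field r \<and>
     (\<forall>a \<in> Field r.
        ((\<exists>c \<in> C. strictly_below r c a) \<and>
         (\<forall>b. strictly_below r b a \<longrightarrow> (\<exists>c \<in> C. strictly_below r b c \<and> strictly_below r c a)))
        \<longrightarrow> a \<in> C)"

definition club :: "'a rel \<Rightarrow> 'a set \<Rightarrow> bool" where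
  "club r C \<longleftrightarrow> closed_in_ord r C \<and> cofinal C r"

definition stationary :: "'a rel \<Rightarrow> 'a set \<Rightarrow> bool" where
  "stationary r S \<longleftrightarrow> S \<subseteq> Field r \<and> (\<forall>C. club r C \<longrightarrow> S \<inter> C \<noteq> {})"

end

theory Submission
  imports Defs "HOL-Library.Countable_Set_Type"
begin

(* Induction on d. Fixing the last coordinate \<alpha> \<in> \<kappa>\<^sub>d, the induction hypothesis yields
stationary sets S\<^sub>1(\<alpha>), \<dots>, S\<^sub>d\<^sub>-\<^sub>1(\<alpha>) and a colour c(\<alpha>) \<in> \<kappa> on whose product f(-,\<alpha>) is constant.
The data (S\<^sub>1(\<alpha>), \<dots>, S\<^sub>d\<^sub>-\<^sub>1(\<alpha>), c(\<alpha>)) range over a set of size at most 2\<^bsup>\<kappa>\<^sub>d\<^sub>-\<^sub>1\<^esup> \<cdot> \<kappa> < \<kappa>\<^sub>d.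
In a regular uncountable cardinal fewer than \<kappa>\<^sub>d clubs intersect in a club, so a partition of
\<kappa>\<^sub>d into fewer than \<kappa>\<^sub>d pieces has a stationary piece; on that piece the data are constant, and
the piece serves as S\<^sub>d. *)

unbundle cardinal_syntax

lemma strictly_below_le_trans:
  assumes r: "Card_order r" and "strictly_below r a b" "(b, c) \<in> r"
  shows "strictly_below r a c"
proof -
  have "trans r" "antisym r" using Card_order_wo_rel[OF r] wo_rel.TRANS wo_rel.ANTISYM by blast+
  then show ?thesis using assms(2,3) unfolding strictly_below_def by (metis antisymD transD)
qed

lemma le_strictly_below_trans:
  assumes r: "Card_order r" and "(a, b) \<in> r" "strictly_below r b c"
  shows "strictly_below r a c"
proof -
  have "trans r" "antisym r" using Card_order_wo_rel[OF r] wo_rel.TRANS wo_rel.ANTISYM by blast+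
  then show ?thesis using assms(2,3) unfolding strictly_below_def by (metis antisymD transD)
qed

lemma not_le_imp_strictly_below:
  assumes r: "Card_order r" and "a \<in> Field r" "b \<in> Field r" "(a, b) \<notin> r"
  shows "strictly_below r b a"
proof -
  have "Refl r" "\<forall>a\<in>Field r. \<forall>b\<in>Field r. (a, b) \<in> r \<or> (b, a) \<in> r"
    using Card_order_wo_rel[OF r] wo_rel.REFL wo_rel.TOTALS by blast+
  then show ?thesis using assms(2-4) unfolding strictly_below_def refl_on_def by blast
qed

lemma countable_ordLess_uncountable:
  assumes r: "Card_order r" and "\<not> countable (Field r)" "countable B"
  shows "|B| <o r"
proof -
  have "|B| \<le>o |UNIV :: nat set|" "\<not> |Field r| \<le>o |UNIV :: nat set|"
    using assms(2,3) countable_card_of_nat by auto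
  then have "|B| <o |Field r|"
    using ordLeq_ordLess_trans not_ordLeq_iff_ordLess[OF card_of_Well_order card_of_Well_order]
    by blast
  then show ?thesis
    using ordLess_ordIso_trans card_of_Field_ordIso[OF r] by blast
qed

lemma regularCard_small_bounded:
  assumes r: "Card_order r" and reg: "regularCard r" and B: "B \<subseteq> Field r" "|B| <o r"
  shows "\<exists>\<beta>\<in>Field r. \<forall>b\<in>B. (b, \<beta>) \<in> r"
proof -
  have "\<not> cofinal B r"
    using reg B not_ordLess_ordIso unfolding regularCard_def by blast
  then obtain \<beta> where \<beta>: "\<beta> \<in> Field r" "\<forall>b\<in>B. \<not> strictly_below r \<beta> b"
    unfolding cofinal_def strictly_below_def by blast
  have "(b, \<beta>) \<in> r" if "b \<in> B" for b
  proof (cases "b = \<beta>")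
    case True
    then show ?thesis using Card_order_wo_rel[OF r] wo_rel.REFL \<beta>(1) refl_onD by fastforce
  next
    case False
    then show ?thesis
      using \<beta> that B(1) not_le_imp_strictly_below[OF r, of b \<beta>] by blast
  qed
  then show ?thesis using \<beta>(1) by blast
qed

lemma regularCard_small_has_sup:
  assumes r: "Card_order r" and "regularCard r" "B \<subseteq> Field r" "|B| <o r"
  shows "\<exists>t\<in>Field r. (\<forall>b\<in>B. (b, t) \<in> r) \<and> (\<forall>u\<in>Field r. (\<forall>b\<in>B. (b, u) \<in> r) \<longrightarrow> (t, u) \<in> r)"
proof -
  let ?U = "{u \<in> Field r. \<forall>b\<in>B. (b, u) \<in> r}"
  have "?U \<noteq> {}" using regularCard_small_bounded[OF assms] by blast
  moreover have "wo_rel r" using Card_order_wo_rel[OF r] .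
  ultimately show ?thesis
    using wo_rel.minim_in[of r ?U] wo_rel.minim_least[of r ?U] by blast
qed

lemma closed_in_ord_INTER:
  assumes "I \<noteq> {}" "\<forall>i\<in>I. closed_in_ord r (C i)"
  shows "closed_in_ord r (\<Inter>i\<in>I. C i)"
  unfolding closed_in_ord_def
proof (intro conjI ballI impI INT_I)
  show "(\<Inter>i\<in>I. C i) \<subseteq> Field r" using assms unfolding closed_in_ord_def by blast
next
  fix a i assume "a \<in> Field r" "i \<in> I" and
    "(\<exists>c\<in>\<Inter>i\<in>I. C i. strictly_below r c a) \<and>
     (\<forall>b. strictly_below r b a \<longrightarrow> (\<exists>c\<in>\<Inter>i\<in>I. C i. strictly_below r b c \<and> strictly_below r c a))"
  then have "(\<exists>c\<in>C i. strictly_below r c a) \<and>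
     (\<forall>b. strictly_below r b a \<longrightarrow> (\<exists>c\<in>C i. strictly_below r b c \<and> strictly_below r c a))"
    by blast
  then show "a \<in> C i" using assms(2) \<open>a \<in> Field r\<close> \<open>i \<in> I\<close> unfolding closed_in_ord_def by blast
qed

lemma interleaved_strictly_below_sup:
  assumes r: "Card_order r"
    and inter: "\<And>n. \<exists>c\<in>C. strictly_below r (s n) c \<and> (c, s (Suc n)) \<in> r"
    and t: "\<And>n. (s n, t) \<in> r"
  shows "strictly_below r (s n) t"
proof -
  obtain c where "strictly_below r (s n) c" "(c, s (Suc n)) \<in> r" using inter by blast
  then have "strictly_below r (s n) (s (Suc n))" by (rule strictly_below_le_trans[OF r])
  then show ?thesis using t by (rule strictly_below_le_trans[OF r])
qed

lemma closed_in_ord_interleaved_sup: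
  assumes r: "Card_order r" and C: "closed_in_ord r C" and sF: "\<And>n. s n \<in> Field r"
    and inter: "\<And>n. \<exists>c\<in>C. strictly_below r (s n) c \<and> (c, s (Suc n)) \<in> r"
    and t: "t \<in> Field r" "\<And>n. (s n, t) \<in> r"
    and least: "\<And>u. u \<in> Field r \<Longrightarrow> (\<forall>n. (s n, u) \<in> r) \<Longrightarrow> (t, u) \<in> r"
  shows "t \<in> C"
proof -
  note below_t = interleaved_strictly_below_sup[of r C s t, OF r inter t(2)]
  have interE: "\<exists>c. c \<in> C \<and> strictly_below r (s n) c \<and> strictly_below r c t" for n
  proof -
    obtain c where c: "c \<in> C" "strictly_below r (s n) c" "(c, s (Suc n)) \<in> r"
      using inter by blast
    then show ?thesis using le_strictly_below_trans[OF r c(3) below_t] by blast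
  qed
  have "\<exists>c\<in>C. strictly_below r b c \<and> strictly_below r c t" if b: "strictly_below r b t" for b
  proof -
    have bF: "b \<in> Field r" using b unfolding strictly_below_def by (meson FieldI1)
    have "(t, b) \<notin> r"
      using b wo_rel.ANTISYM[OF Card_order_wo_rel[OF r]] unfolding strictly_below_def
      by (meson antisymD)
    then obtain n where "(s n, b) \<notin> r" using least bF by blast
    then have "strictly_below r b (s n)" using not_le_imp_strictly_below[OF r sF bF] by blast
    moreover obtain c where "c \<in> C" "strictly_below r (s n) c" "strictly_below r c t"
      using interE by blast
    ultimately show ?thesis
      using strictly_below_le_trans[OF r, of b "s n" c] unfolding strictly_below_def by blast
  qed
  moreover have "\<exists>c\<in>C. strictly_below r c t" using interE by blast
  ultimately show ?thesis using C t(1) unfolding closed_in_ord_def by blast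
qed

lemma club_subset_Field: "club r C \<Longrightarrow> C \<subseteq> Field r"
  unfolding club_def closed_in_ord_def by (elim conjE)

lemma club_family_meets_interval:
  assumes r: "Card_order r" and reg: "regularCard r"
    and I: "|I| <o r" and cl: "\<forall>i\<in>I. club r (C i)" and \<alpha>: "\<alpha> \<in> Field r"
  shows "\<exists>\<beta>\<in>Field r. \<forall>i\<in>I. \<exists>c\<in>C i. strictly_below r \<alpha> c \<and> (c, \<beta>) \<in> r"
proof -
  have "\<forall>i\<in>I. \<exists>c. c \<in> C i \<and> strictly_below r \<alpha> c"
    using cl \<alpha> unfolding club_def cofinal_def strictly_below_def by blast
  then obtain m where m: "\<forall>i\<in>I. m i \<in> C i \<and> strictly_below r \<alpha> (m i)"
    by (rule bchoice[elim_format]) blast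
  have "m ` I \<subseteq> Field r" using m cl club_subset_Field by blast
  moreover have "|m ` I| <o r" using ordLeq_ordLess_trans[OF card_of_image I] .
  ultimately obtain \<beta> where "\<beta> \<in> Field r" "\<forall>b\<in>m ` I. (b, \<beta>) \<in> r"
    using regularCard_small_bounded[OF r reg] by blast
  then show ?thesis using m by blast
qed

lemma cofinal_INTER_club:
  assumes r: "Card_order r" and unc: "\<not> countable (Field r)" and reg: "regularCard r"
    and I: "|I| <o r" "I \<noteq> {}" and cl: "\<forall>i\<in>I. club r (C i)"
  shows "cofinal (\<Inter>i\<in>I. C i) r"
proof -
  have "\<forall>\<alpha>\<in>Field r. \<exists>\<beta>. \<beta> \<in> Field r \<and> (\<forall>i\<in>I. \<exists>c\<in>C i. strictly_below r \<alpha> c \<and> (c, \<beta>) \<in> r)"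
    using club_family_meets_interval[OF r reg I(1) cl] by blast
  then obtain nxt where nxt: "\<And>\<alpha>. \<alpha> \<in> Field r \<Longrightarrow>
      nxt \<alpha> \<in> Field r \<and> (\<forall>i\<in>I. \<exists>c\<in>C i. strictly_below r \<alpha> c \<and> (c, nxt \<alpha>) \<in> r)"
    by (rule bchoice[elim_format]) blast
  show ?thesis
    unfolding cofinal_def
  proof
    fix a assume a: "a \<in> Field r"
    \<comment> \<open>The supremum of a, nxt a, nxt (nxt a), \<dots> is a limit point of every C i.\<close>
    define s where "s n = (nxt ^^ n) a" for n
    have sF: "s n \<in> Field r" for n
      by (induction n) (use a nxt in \<open>auto simp: s_def\<close>)
    have inter: "\<exists>c\<in>C i. strictly_below r (s n) c \<and> (c, s (Suc n)) \<in> r" if "i \<in> I" for i n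
      using nxt[OF sF[of n]] that by (simp add: s_def)
    have "range s \<subseteq> Field r" using sF by blast
    moreover have "|range s| <o r" by (rule countable_ordLess_uncountable[OF r unc]) simp
    ultimately obtain t where "t \<in> Field r" "\<forall>b\<in>range s. (b, t) \<in> r"
      and "\<forall>u\<in>Field r. (\<forall>b\<in>range s. (b, u) \<in> r) \<longrightarrow> (t, u) \<in> r"
      using regularCard_small_has_sup[OF r reg] by blast
    then have t: "t \<in> Field r" "\<And>n. (s n, t) \<in> r"
      and least: "\<And>u. u \<in> Field r \<Longrightarrow> (\<forall>n. (s n, u) \<in> r) \<Longrightarrow> (t, u) \<in> r"
      by auto
    have "t \<in> C i" if "i \<in> I" for i
    proof -
      have "closed_in_ord r (C i)" using cl that unfolding club_def by blast
      then show ?thesis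
        using closed_in_ord_interleaved_sup[of r "C i" s t, OF r _ sF inter[OF that] t least] by blast
    qed
    moreover have "strictly_below r a t"
    proof -
      obtain i where "i \<in> I" using I(2) by blast
      from interleaved_strictly_below_sup[of r "C i" s t, OF r inter[OF this] t(2), of 0] show ?thesis
        by (simp add: s_def)
    qed
    ultimately show "\<exists>t\<in>\<Inter>i\<in>I. C i. a \<noteq> t \<and> (a, t) \<in> r"
      unfolding strictly_below_def by (intro bexI[of _ t]) auto
  qed
qed

lemma club_INTER:
  assumes "Card_order r" "\<not> countable (Field r)" "regularCard r"
    and "|I| <o r" "I \<noteq> {}" "\<forall>i\<in>I. club r (C i)"
  shows "club r (\<Inter>i\<in>I. C i)"
proof -
  have "\<forall>i\<in>I. closed_in_ord r (C i)" using assms(6) unfolding club_def by blast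
  then show ?thesis
    using closed_in_ord_INTER[OF assms(5)] cofinal_INTER_club[OF assms] unfolding club_def by blast
qed

lemma stationary_fibre:
  assumes r: "Card_order r" and unc: "\<not> countable (Field r)" and reg: "regularCard r"
    and V: "|V| <o r" and g: "g ` Field r \<subseteq> V"
  shows "\<exists>v\<in>V. stationary r {a \<in> Field r. g a = v}"
proof (rule ccontr)
  assume none: "\<not> ?thesis"
  have "\<exists>C. club r C \<and> {a \<in> Field r. g a = v} \<inter> C = {}" if "v \<in> V" for v
  proof -
    have "\<not> stationary r {a \<in> Field r. g a = v}" using none that by blast
    then show ?thesis unfolding stationary_def by blast
  qed
  then obtain C where C: "\<And>v. v \<in> V \<Longrightarrow> club r (C v) \<and> {a \<in> Field r. g a = v} \<inter> C v = {}"
    by metis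
  have "Field r \<noteq> {}" using unc by auto
  then obtain a where a: "a \<in> Field r" by blast
  then have "g a \<in> V" using g by blast
  then have "club r (\<Inter>v\<in>V. C v)" using club_INTER[OF r unc reg V] C by blast
  then obtain b where b: "b \<in> (\<Inter>v\<in>V. C v)" using a unfolding club_def cofinal_def by blast
  then have "b \<in> C (g a)" using \<open>g a \<in> V\<close> by blast
  then have "g b \<in> V" using club_subset_Field[of r "C (g a)"] C[OF \<open>g a \<in> V\<close>] g by blast
  then show False using b C[of "g b"] club_subset_Field[of r "C (g b)"] by blast
qed

lemma card_of_Times_ordLess_infinite_Field:
  assumes inf: "\<not> finite (Field r)" and r: "Card_order r" and "|A| <o r" "|B| <o r"
  shows "|A \<times> B| <o r"
proof (cases "finite (A \<times> B)")
  case True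
  then show ?thesis
    using finite_ordLess_infinite[OF card_of_Well_order card_order_on_well_order_on[OF r] _ inf]
    by (simp add: Field_card_of)
next
  case False
  then have "\<not> finite (Field (card_of (A <+> B)))" by (auto simp: Field_card_of)
  then have "|A \<times> B| \<le>o |A <+> B|"
    by (rule card_of_Times_ordLeq_infinite_Field[OF _ card_of_Plus1 card_of_Plus2 card_of_Card_order])
  moreover have "|A <+> B| <o r" using card_of_Plus_ordLess_infinite_Field[OF inf r assms(3,4)] .
  ultimately show ?thesis by (rule ordLeq_ordLess_trans)
qed

lemma card_of_Pow_mono:
  assumes "|A| \<le>o |B|"
  shows "|Pow A| \<le>o |Pow B|"
proof -
  obtain h where "inj_on h A" "h ` A \<subseteq> B" using assms card_of_ordLeq[of A B] by blast
  then have "inj_on (image h) (Pow A)" "image h ` Pow A \<subseteq> Pow B"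
    by (auto simp: inj_on_image_Pow)
  then show ?thesis using card_of_ordLeq[of "Pow A" "Pow B"] by blast
qed

lemma card_of_Field_mono_Pow_growth:
  assumes card: "\<And>i. i < D \<Longrightarrow> Card_order (ks i)"
    and growth: "\<And>i. Suc i < D \<Longrightarrow> |Pow (Field (ks i))| <o ks (Suc i)"
    and "i \<le> j" "j < D"
  shows "|Field (ks i)| \<le>o |Field (ks j)|"
  using assms(3,4)
proof (induction j rule: dec_induct)
  case base
  show ?case by (rule ordLeq_refl[OF card_of_Card_order])
next
  case (step k)
  have "|Field (ks k)| <o |Field (ks (Suc k))|"
    using ordLess_transitive[OF card_of_Pow growth[OF step.prems]]
      ordIso_symmetric[OF card_of_Field_ordIso[OF card[OF step.prems]]]
    by (rule ordLess_ordIso_trans)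
  then show ?case using step.IH step.prems ordLeq_ordLess_trans ordLess_imp_ordLeq by fastforce
qed

lemma card_of_Pow_Times_ordLess:
  assumes card: "\<And>i. i < Suc d \<Longrightarrow> Card_order (ks i)"
    and unc: "\<And>i. i < Suc d \<Longrightarrow> \<not> countable (Field (ks i))"
    and first: "|K| <o ks 0"
    and growth: "\<And>i. Suc i < Suc d \<Longrightarrow> |Pow (Field (ks i))| <o ks (Suc i)"
  shows "|Pow ({..<d} \<times> (\<Union>i<d. Field (ks i))) \<times> K| <o ks d"
proof -
  have kd: "Card_order (ks d)" using card[of d] by simp
  have inf: "\<not> finite (Field (ks d))" using unc[of d] countable_finite by blast
  have mono: "|Field (ks i)| \<le>o |Field (ks j)|" if "i \<le> j" "j < Suc d" for i j
    by (rule card_of_Field_mono_Pow_growth[of "Suc d" ks, OF card growth that])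
  have "|K| <o |Field (ks 0)|"
    using first ordIso_symmetric[OF card_of_Field_ordIso[OF card[of 0]]] by (simp add: ordLess_ordIso_trans)
  then have "|K| <o |Field (ks d)|" using mono[of 0 d] by (simp add: ordLess_ordLeq_trans)
  then have K: "|K| <o ks d" using card_of_Field_ordIso[OF kd] by (rule ordLess_ordIso_trans)
  have "|Pow ({..<d} \<times> (\<Union>i<d. Field (ks i)))| <o ks d"
  proof (cases d)
    case 0
    then have "finite (Field (card_of (Pow ({..<d} \<times> (\<Union>i<d. Field (ks i))))))"
      by (simp add: Field_card_of)
    from finite_ordLess_infinite[OF card_of_Well_order card_order_on_well_order_on[OF kd] this inf]
    show ?thesis .
  next
    case (Suc e)
    have "e < Suc d" using Suc by simp
    then have "\<not> finite (Field (ks e))" using unc countable_finite by blast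
    then have inf_e: "\<not> finite (Field (card_of (Field (ks e))))" by (simp add: Field_card_of)
    have "finite (Field (card_of {..<d}))" by (simp add: Field_card_of)
    from ordLess_imp_ordLeq[OF finite_ordLess_infinite[OF card_of_Well_order card_of_Well_order this inf_e]]
    have I: "|{..<d}| \<le>o |Field (ks e)|" .
    have "\<forall>i\<in>{..<d}. |Field (ks i)| \<le>o |Field (ks e)|" using mono Suc by auto
    then have "|\<Union>i<d. Field (ks i)| \<le>o |Field (ks e)|"
      using card_of_UNION_ordLeq_infinite[OF _ I] inf_e by (simp add: Field_card_of)
    from card_of_Times_ordLeq_infinite_Field[OF inf_e I this card_of_Card_order]
    have "|Pow ({..<d} \<times> (\<Union>i<d. Field (ks i)))| \<le>o |Pow (Field (ks e))|"
      by (rule card_of_Pow_mono)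
    moreover have "|Pow (Field (ks e))| <o ks d" using growth[of e] Suc by simp
    ultimately show ?thesis by (rule ordLeq_ordLess_trans)
  qed
  from card_of_Times_ordLess_infinite_Field[OF inf kd this K] show ?thesis .
qed

lemma PiE_cong_Sigma: "Sigma I A = Sigma I B \<Longrightarrow> Pi\<^sub>E I A = Pi\<^sub>E I B"
  by (rule PiE_cong) blast

lemma PiE_lessThan_Suc_homogeneous:
  assumes "\<forall>\<alpha>\<in>A. \<forall>x\<in>(\<Pi>\<^sub>E i\<in>{..<d}. S i). f (x(d := \<alpha>)) = c"
  shows "\<forall>x\<in>(\<Pi>\<^sub>E i\<in>{..<Suc d}. (S(d := A)) i). f x = c"
proof
  fix x assume x: "x \<in> (\<Pi>\<^sub>E i\<in>{..<Suc d}. (S(d := A)) i)"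
  have "x i \<in> S i" if "i < d" for i using PiE_mem[OF x, of i] that by simp
  then have "x(d := undefined) \<in> (\<Pi>\<^sub>E i\<in>{..<d}. S i)"
    using x by (auto simp: PiE_iff extensional_def)
  moreover have "x d \<in> A" using PiE_mem[OF x, of d] by simp
  ultimately have "f ((x(d := undefined))(d := x d)) = c" using assms by blast
  then show "f x = c" by simp
qed

lemma stationary_homogeneous_PiE_Suc:
  fixes K :: "'b set" and ks :: "nat \<Rightarrow> 'a rel" and f :: "(nat \<Rightarrow> 'a) \<Rightarrow> 'b"
  assumes kd: "Card_order (ks d)" "\<not> countable (Field (ks d))" "regularCard (ks d)"
    and few: "|Pow ({..<d} \<times> (\<Union>i<d. Field (ks i))) \<times> K| <o ks d"
    and sec: "\<And>\<alpha>. \<alpha> \<in> Field (ks d) \<Longrightarrow>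
      (\<forall>i<d. stationary (ks i) (S \<alpha> i)) \<and> c \<alpha> \<in> K \<and>
      (\<forall>x\<in>(\<Pi>\<^sub>E i\<in>{..<d}. S \<alpha> i). f (x(d := \<alpha>)) = c \<alpha>)"
  shows "\<exists>S'. (\<forall>i<Suc d. stationary (ks i) (S' i)) \<and>
    (\<exists>c'\<in>K. \<forall>x\<in>(\<Pi>\<^sub>E i\<in>{..<Suc d}. S' i). f x = c')"
proof -
  \<comment> \<open>The sets S \<alpha> 0, \<dots>, S \<alpha> (d - 1) are encoded by the single set SIGMA i:{..<d}. S \<alpha> i.\<close>
  define colour where "colour \<alpha> = (SIGMA i:{..<d}. S \<alpha> i, c \<alpha>)" for \<alpha>
  have "colour ` Field (ks d) \<subseteq> Pow ({..<d} \<times> (\<Union>i<d. Field (ks i))) \<times> K"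
    using sec unfolding colour_def stationary_def by fastforce
  from ordLeq_ordLess_trans[OF card_of_mono1[OF this] few]
  have "|colour ` Field (ks d)| <o ks d" .
  then obtain v where "v \<in> colour ` Field (ks d)"
    and A: "stationary (ks d) {a \<in> Field (ks d). colour a = v}"
    using stationary_fibre[OF kd _ subset_refl] by blast
  then obtain \<alpha>0 where \<alpha>0: "\<alpha>0 \<in> Field (ks d)" "v = colour \<alpha>0" by blast
  define A where "A = {a \<in> Field (ks d). colour a = v}"
  have "\<forall>x\<in>(\<Pi>\<^sub>E i\<in>{..<d}. S \<alpha>0 i). f (x(d := a)) = c \<alpha>0" if "a \<in> A" for a
  proof -
    have "colour a = colour \<alpha>0" "a \<in> Field (ks d)" using that \<alpha>0 unfolding A_def by auto
    then show ?thesis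
      using sec[of a] PiE_cong_Sigma[of "{..<d}" "S a" "S \<alpha>0"] unfolding colour_def by auto
  qed
  then have "\<forall>x\<in>(\<Pi>\<^sub>E i\<in>{..<Suc d}. ((S \<alpha>0)(d := A)) i). f x = c \<alpha>0"
    by (intro PiE_lessThan_Suc_homogeneous) blast
  moreover have "\<forall>i<Suc d. stationary (ks i) (((S \<alpha>0)(d := A)) i)"
    using sec[OF \<alpha>0(1)] A unfolding A_def by (auto simp: less_Suc_eq)
  ultimately show ?thesis using sec[OF \<alpha>0(1)] by blast
qed

lemma stationary_homogeneous_PiE:
  fixes K :: "'b set" and ks :: "nat \<Rightarrow> 'a rel" and f :: "(nat \<Rightarrow> 'a) \<Rightarrow> 'b"
  assumes "\<And>i. i < d \<Longrightarrow> Card_order (ks i)"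
    and "\<And>i. i < d \<Longrightarrow> \<not> countable (Field (ks i))"
    and "\<And>i. i < d \<Longrightarrow> regularCard (ks i)"
    and "|K| <o ks 0"
    and "\<And>i. Suc i < d \<Longrightarrow> |Pow (Field (ks i))| <o ks (Suc i)"
    and "f \<in> (\<Pi>\<^sub>E i\<in>{..<d}. Field (ks i)) \<rightarrow> K"
  shows "\<exists>S. (\<forall>i<d. stationary (ks i) (S i)) \<and> (\<exists>c\<in>K. \<forall>x\<in>(\<Pi>\<^sub>E i\<in>{..<d}. S i). f x = c)"
  using assms
proof (induction d arbitrary: f)
  case 0
  have "f (\<lambda>_. undefined) \<in> K" using "0.prems"(6) by auto
  then show ?case by auto
next
  case (Suc d)
  note card = Suc.prems(1) and unc = Suc.prems(2) and reg = Suc.prems(3)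
    and first = Suc.prems(4) and growth = Suc.prems(5) and f = Suc.prems(6)
  have "\<exists>S c. (\<forall>i<d. stationary (ks i) (S i)) \<and> c \<in> K \<and>
      (\<forall>x\<in>(\<Pi>\<^sub>E i\<in>{..<d}. S i). f (x(d := \<alpha>)) = c)" if \<alpha>: "\<alpha> \<in> Field (ks d)" for \<alpha>
  proof -
    have "(\<lambda>x. f (x(d := \<alpha>))) \<in> (\<Pi>\<^sub>E i\<in>{..<d}. Field (ks i)) \<rightarrow> K"
      using f PiE_fun_upd[of \<alpha> "\<lambda>i. Field (ks i)" d _ "{..<d}"] \<alpha> by (auto simp: lessThan_Suc)
    from Suc.IH[OF card unc reg first growth this] show ?thesis
      by (simp add: less_SucI fun_upd_def) blast
  qed
  then obtain S c where sec: "\<And>\<alpha>. \<alpha> \<in> Field (ks d) \<Longrightarrow>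
      (\<forall>i<d. stationary (ks i) (S \<alpha> i)) \<and> c \<alpha> \<in> K \<and>
      (\<forall>x\<in>(\<Pi>\<^sub>E i\<in>{..<d}. S \<alpha> i). f (x(d := \<alpha>)) = c \<alpha>)"
    by metis
  have "Card_order (ks d)" "\<not> countable (Field (ks d))" "regularCard (ks d)"
    using card[of d] unc[of d] reg[of d] by simp_all
  from stationary_homogeneous_PiE_Suc[OF this card_of_Pow_Times_ordLess[OF card unc first growth] sec]
  show ?case .
qed

theorem mainTheorem3:
  fixes K :: "'b set"
    and d :: nat
    and ks :: "nat \<Rightarrow> 'a rel"
    and f :: "(nat \<Rightarrow> 'a) \<Rightarrow> 'b"
  assumes d: "d \<ge> 1"
    and card: "\<And>i. i < d \<Longrightarrow> Card_order (ks i)"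
    and unc: "\<And>i. i < d \<Longrightarrow> \<not> countable (Field (ks i))"
    and reg: "\<And>i. i < d \<Longrightarrow> regularCard (ks i)"
    and first: "(card_of K, ks 0) \<in> ordLess"
    and growth: "\<And>i. Suc i < d \<Longrightarrow> (card_of (Pow (Field (ks i))), ks (Suc i)) \<in> ordLess"
    and f: "f \<in> (\<Pi>\<^sub>E i\<in>{..<d}. Field (ks i)) \<rightarrow> K"
  shows "\<exists>S :: nat \<Rightarrow> 'a set. (\<forall>i<d. stationary (ks i) (S i)) \<and>
           (\<exists>c. \<forall>x \<in> (\<Pi>\<^sub>E i\<in>{..<d}. S i). f x = c)"
  using stationary_homogeneous_PiE[OF card unc reg first growth f] by blast

end
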